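(* If $G$ is a connected block graph, then $\mu_t(G)=|\mathcal{S}(G)|=n(G)-|\mathcal{P}(G)|$.
   Context: All graphs are finite, simple and undirected; $n(G)$ denotes the order of $G$ and $N_G[v]$ the closed neighborhood of $v$. A block graph is a graph in which every block (maximal 2-connected subgraph or bridge) is a complete graph. Let $G$ be a connected graph and $X\subseteq V(G)$. Two vertices $x,y\in V(G)$ are $X$-visible if there exists a shortest $x,y$-path in $G$ none of whose internal vertices belongs to $X$. The set $X$ is a total mutual-visibility set of $G$ if every two vertices of $G$ are $X$-visible (the empty set is allowed). The total mutual-visibility number $\mu_t(G)$ is the maximum cardinality of a total mutual-visibility set of $G$. A vertex is simplicial if its neighbors induce a complete graph; $\mathcal{S}(G)$ is the set of simplicial vertices. $\mathcal{P}(G)$ is the set of vertices $v$ for which there exist two distinct vertices $u,w\in V(G)$ with $N_G[u]\cap N_G[w]=\{v\}$. *)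

theory Defs
  imports Main
begin

definition simple_graph :: "'a set \<Rightarrow> ('a \<Rightarrow> 'a \<Rightarrow> bool) \<Rightarrow> bool" where
  "simple_graph V E \<longleftrightarrow> finite V \<and> (\<forall>x y. E x y \<longrightarrow> x \<in> V \<and> y \<in> V)
     \<and> (\<forall>x y. E x y \<longrightarrow> E y x) \<and> (\<forall>x. \<not> E x x)"

text \<open>A walk is a nonempty vertex list with consecutive vertices adjacent; its length is
  the number of edges, i.e. length - 1.\<close>

definition walk :: "('a \<Rightarrow> 'a \<Rightarrow> bool) \<Rightarrow> 'a list \<Rightarrow> bool" where
  "walk E xs \<longleftrightarrow> xs \<noteq> [] \<and> (\<forall>i. Suc i < length xs \<longrightarrow> E (xs ! i) (xs ! Suc i))"

definition walk_from_to :: "('a \<Rightarrow> 'a \<Rightarrow> bool) \<Rightarrow> 'a \<Rightarrow> 'a \<Rightarrow> 'a list \<Rightarrow> bool" where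
  "walk_from_to E x y xs \<longleftrightarrow> walk E xs \<and> hd xs = x \<and> last xs = y"

text \<open>Connectedness of the subgraph induced by S (the empty set counts as connected).\<close>

definition connected_on :: "('a \<Rightarrow> 'a \<Rightarrow> bool) \<Rightarrow> 'a set \<Rightarrow> bool" where
  "connected_on E S \<longleftrightarrow> (\<forall>x\<in>S. \<forall>y\<in>S. \<exists>xs. walk_from_to E x y xs \<and> set xs \<subseteq> S)"

definition connected_graph :: "'a set \<Rightarrow> ('a \<Rightarrow> 'a \<Rightarrow> bool) \<Rightarrow> bool" where
  "connected_graph V E \<longleftrightarrow> V \<noteq> {} \<and> connected_on E V"

definition shortest_path :: "('a \<Rightarrow> 'a \<Rightarrow> bool) \<Rightarrow> 'a \<Rightarrow> 'a \<Rightarrow> 'a list \<Rightarrow> bool" where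
  "shortest_path E x y xs \<longleftrightarrow> walk_from_to E x y xs
     \<and> (\<forall>ys. walk_from_to E x y ys \<longrightarrow> length xs \<le> length ys)"

definition internal_vertices :: "'a list \<Rightarrow> 'a set" where
  "internal_vertices xs = set (butlast (tl xs))"

definition X_visible :: "('a \<Rightarrow> 'a \<Rightarrow> bool) \<Rightarrow> 'a set \<Rightarrow> 'a \<Rightarrow> 'a \<Rightarrow> bool" where
  "X_visible E X x y \<longleftrightarrow> (\<exists>xs. shortest_path E x y xs \<and> internal_vertices xs \<inter> X = {})"

definition total_mutual_visibility_set :: "'a set \<Rightarrow> ('a \<Rightarrow> 'a \<Rightarrow> bool) \<Rightarrow> 'a set \<Rightarrow> bool" where
  "total_mutual_visibility_set V E X \<longleftrightarrow> X \<subseteq> V \<and> (\<forall>x\<in>V. \<forall>y\<in>V. X_visible E X x y)"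

definition mu_t :: "'a set \<Rightarrow> ('a \<Rightarrow> 'a \<Rightarrow> bool) \<Rightarrow> nat" where
  "mu_t V E = Max (card ` {X. total_mutual_visibility_set V E X})"

definition closed_nbhd :: "('a \<Rightarrow> 'a \<Rightarrow> bool) \<Rightarrow> 'a \<Rightarrow> 'a set" where
  "closed_nbhd E v = insert v {u. E v u}"

definition simplicial_vertices :: "'a set \<Rightarrow> ('a \<Rightarrow> 'a \<Rightarrow> bool) \<Rightarrow> 'a set" where
  "simplicial_vertices V E = {v\<in>V. \<forall>a b. E v a \<and> E v b \<and> a \<noteq> b \<longrightarrow> E a b}"

definition P_set :: "'a set \<Rightarrow> ('a \<Rightarrow> 'a \<Rightarrow> bool) \<Rightarrow> 'a set" where
  "P_set V E = {v\<in>V. \<exists>u\<in>V. \<exists>w\<in>V. u \<noteq> w \<and> closed_nbhd E u \<inter> closed_nbhd E w = {v}}"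

text \<open>For a connected graph with at
  least two vertices these are exactly the maximal 2-connected subgraphs and the bridges
  (blocks are induced subgraphs); for K1 the only block is the vertex itself.\<close>

definition nonseparable :: "'a set \<Rightarrow> ('a \<Rightarrow> 'a \<Rightarrow> bool) \<Rightarrow> 'a set \<Rightarrow> bool" where
  "nonseparable V E B \<longleftrightarrow> B \<noteq> {} \<and> B \<subseteq> V \<and> connected_on E B
     \<and> (\<forall>v\<in>B. connected_on E (B - {v}))"

definition is_block :: "'a set \<Rightarrow> ('a \<Rightarrow> 'a \<Rightarrow> bool) \<Rightarrow> 'a set \<Rightarrow> bool" where
  "is_block V E B \<longleftrightarrow> nonseparable V E B \<and> (\<forall>B'. nonseparable V E B' \<and> B \<subseteq> B' \<longrightarrow> B' = B)"

definition is_clique :: "('a \<Rightarrow> 'a \<Rightarrow> bool) \<Rightarrow> 'a set \<Rightarrow> bool" where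
  "is_clique E B \<longleftrightarrow> (\<forall>x\<in>B. \<forall>y\<in>B. x \<noteq> y \<longrightarrow> E x y)"

definition block_graph :: "'a set \<Rightarrow> ('a \<Rightarrow> 'a \<Rightarrow> bool) \<Rightarrow> bool" where
  "block_graph V E \<longleftrightarrow> (\<forall>B. is_block V E B \<longrightarrow> is_clique E B)"

end

theory Submission
  imports Defs
begin

text \<open>A simplicial vertex is never an internal vertex of a shortest path: its two neighbours
  on the path are equal or adjacent, so the path could be shortened. Hence the simplicial
  vertices form a total mutual-visibility set. A vertex v with \<open>N[u] \<inter> N[w] = {v}\<close> is the
  unique internal vertex of every shortest u,w-path, so it lies in no such set. Simplicial
  vertices never have this property, and in a block graph every non-simplicial vertex does:
  if two non-adjacent neighbours a, b of v had a further common neighbour z, the 4-cycle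
  a v b z would lie in a block that is not a clique.\<close>

lemma simple_graph_symp: "simple_graph V E \<Longrightarrow> symp E"
  unfolding simple_graph_def symp_def by blast

lemma walk_from_to_iff:
  "walk_from_to E x y xs \<longleftrightarrow> xs \<noteq> [] \<and> successively E xs \<and> hd xs = x \<and> last xs = y"
  unfolding walk_from_to_def walk_def successively_conv_nth by blast

lemma walk_from_to_rev:
  assumes sym: "symp E" and "walk_from_to E x y xs"
  shows "walk_from_to E y x (rev xs)"
proof -
  have "successively E xs" using assms(2) by (simp add: walk_from_to_iff)
  then have "successively (\<lambda>a b. E b a) xs"
    by (rule successively_mono) (blast intro: sympD[OF sym])
  with assms(2) show ?thesis by (simp add: walk_from_to_iff hd_rev last_rev)
qed

lemma walk_from_to_append:
  assumes "walk_from_to E x y xs" and "walk_from_to E y z ys"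
  shows "walk_from_to E x z (xs @ tl ys)"
  using assms by (cases ys) (auto simp: walk_from_to_iff successively_append_iff successively_Cons)

lemma walk_from_to_appendD:
  assumes "walk_from_to E x y (xs @ ys)" and "xs \<noteq> []" and "ys \<noteq> []"
  shows "walk_from_to E x (last xs) xs" and "walk_from_to E (hd ys) y ys"
  using assms by (simp_all add: walk_from_to_iff successively_append_iff)

lemma connected_on_if_reachable_from:
  assumes sym: "symp E"
    and reach: "\<And>y. y \<in> S \<Longrightarrow> \<exists>xs. walk_from_to E c y xs \<and> set xs \<subseteq> S"
  shows "connected_on E S"
  unfolding connected_on_def
proof (intro ballI)
  fix x y assume "x \<in> S" "y \<in> S"
  obtain xs where xs: "walk_from_to E c x xs" "set xs \<subseteq> S"
    using reach \<open>x \<in> S\<close> by blast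
  obtain ys where ys: "walk_from_to E c y ys" "set ys \<subseteq> S"
    using reach \<open>y \<in> S\<close> by blast
  have "walk_from_to E x y (rev xs @ tl ys)"
    using walk_from_to_append[OF walk_from_to_rev[OF sym xs(1)] ys(1)] .
  moreover have "set (rev xs @ tl ys) \<subseteq> S"
    using xs(2) ys(2) by (cases ys) auto
  ultimately show "\<exists>zs. walk_from_to E x y zs \<and> set zs \<subseteq> S" by blast
qed

lemma connected_on_within_two_steps:
  assumes sym: "symp E" and "c \<in> S"
    and near: "\<And>y. y \<in> S \<Longrightarrow> y = c \<or> E c y \<or> (\<exists>z\<in>S. E c z \<and> E z y)"
  shows "connected_on E S"
proof (rule connected_on_if_reachable_from[OF sym])
  fix y assume "y \<in> S"
  with near consider "y = c" | "E c y" | z where "z \<in> S" "E c z" "E z y" by blast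
  then show "\<exists>xs. walk_from_to E c y xs \<and> set xs \<subseteq> S"
  proof cases
    case 1 then show ?thesis using \<open>c \<in> S\<close> by (intro exI[of _ "[c]"]) (simp add: walk_from_to_iff)
  next
    case 2 then show ?thesis using \<open>c \<in> S\<close> \<open>y \<in> S\<close>
      by (intro exI[of _ "[c, y]"]) (simp add: walk_from_to_iff)
  next
    case 3 then show ?thesis using \<open>c \<in> S\<close> \<open>y \<in> S\<close>
      by (intro exI[of _ "[c, z, y]"]) (simp add: walk_from_to_iff)
  qed
qed

lemma connected_on_path3:
  assumes sym: "symp E" and "E x y" "E y z"
  shows "connected_on E {x, y, z}"
  by (rule connected_on_within_two_steps[OF sym, where c = y])
    (use assms(2,3) sympD[OF sym assms(2)] in auto)

lemma cycle4_nonseparable: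
  assumes sym: "symp E"
    and E: "E a b" "E b c" "E c d" "E d a" and dist: "distinct [a, b, c, d]"
    and V: "{a, b, c, d} \<subseteq> V"
  shows "nonseparable V E {a, b, c, d}"
proof -
  have "connected_on E {a, b, c, d}"
    by (rule connected_on_within_two_steps[OF sym, where c = a])
      (use E sympD[OF sym E(4)] in auto)
  moreover have "connected_on E ({a, b, c, d} - {v})" if "v \<in> {a, b, c, d}" for v
  proof -
    have "{a, b, c, d} - {a} = {b, c, d}" "{a, b, c, d} - {b} = {c, d, a}"
      "{a, b, c, d} - {c} = {d, a, b}" "{a, b, c, d} - {d} = {a, b, c}"
      using dist by auto
    moreover have "connected_on E {b, c, d}" "connected_on E {c, d, a}"
      "connected_on E {d, a, b}" "connected_on E {a, b, c}"
      using E by (auto intro: connected_on_path3[OF sym])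
    ultimately show ?thesis using that by (elim insertE) auto
  qed
  ultimately show ?thesis using V by (simp add: nonseparable_def)
qed

lemma shortest_path_no_shortcut:
  assumes "shortest_path E x y (p @ a # m # b # q)"
  shows "a \<noteq> b \<and> \<not> E a b"
proof -
  let ?xs = "p @ a # m # b # q"
  have walk: "walk_from_to E x y ?xs"
    and min: "\<And>ys. walk_from_to E x y ys \<Longrightarrow> length ?xs \<le> length ys"
    using assms by (auto simp: shortest_path_def)
  have "walk_from_to E x y ((p @ [a]) @ (m # b # q))" using walk by simp
  then have to_a: "walk_from_to E x a (p @ [a])"
    using walk_from_to_appendD(1) by fastforce
  have "walk_from_to E x y ((p @ [a, m]) @ (b # q))" using walk by simp
  then have from_b: "walk_from_to E b y (b # q)"
    using walk_from_to_appendD(2) by fastforce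
  show ?thesis
  proof
    show "a \<noteq> b"
    proof
      assume "a = b"
      then have "walk_from_to E x y (p @ a # q)"
        using walk_from_to_append[OF to_a] from_b by fastforce
      then show False using min by fastforce
    qed
    show "\<not> E a b"
    proof
      assume "E a b"
      then have "walk_from_to E a y (a # b # q)"
        using from_b by (simp add: walk_from_to_iff)
      then have "walk_from_to E x y (p @ a # b # q)"
        using walk_from_to_append[OF to_a] by fastforce
      then show False using min by fastforce
    qed
  qed
qed

lemma internal_vertex_split:
  assumes "s \<in> internal_vertices xs"
  obtains p a b q where "xs = p @ a # s # b # q"
proof -
  obtain x ys where "xs = x # ys" and "s \<in> set (butlast ys)"
    using assms by (cases xs) (auto simp: internal_vertices_def)
  then obtain zs l where xs: "xs = x # zs @ [l]" and "s \<in> set zs"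
    by (cases ys rule: rev_cases) auto
  then obtain l1 l2 where "zs = l1 @ s # l2"
    by (meson split_list)
  with xs have "xs = (x # l1) @ s # (l2 @ [l])" by simp
  moreover obtain p a where "x # l1 = p @ [a]" by (cases "x # l1" rule: rev_cases) auto
  moreover obtain b q where "l2 @ [l] = b # q" by (cases "l2 @ [l]") auto
  ultimately have "xs = p @ a # s # b # q" by simp
  then show thesis by (rule that)
qed

lemma shortest_path_exists:
  assumes "walk_from_to E x y zs"
  obtains xs where "shortest_path E x y xs"
  using ex_has_least_nat[of "walk_from_to E x y" zs length] assms that
  unfolding shortest_path_def by blast

lemma simplicial_not_internal:
  assumes sym: "symp E"
    and sp: "shortest_path E x y xs" and s: "s \<in> simplicial_vertices V E"
  shows "s \<notin> internal_vertices xs"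
proof
  assume "s \<in> internal_vertices xs"
  then obtain p a b q where xs: "xs = p @ a # s # b # q" by (rule internal_vertex_split)
  have "successively E xs" using sp by (simp add: shortest_path_def walk_from_to_iff)
  then have "E a s" "E s b" by (simp_all add: xs successively_append_iff)
  then have "E s a" "E s b" using sympD[OF sym] by blast+
  moreover have "a \<noteq> b" "\<not> E a b" using shortest_path_no_shortcut[OF sp[unfolded xs]] by blast+
  ultimately show False using s unfolding simplicial_vertices_def by blast
qed

lemma simplicial_vertices_total_mutual_visibility:
  assumes "simple_graph V E" and "connected_graph V E"
  shows "total_mutual_visibility_set V E (simplicial_vertices V E)"
  unfolding total_mutual_visibility_set_def
proof (intro conjI ballI)
  show "simplicial_vertices V E \<subseteq> V" by (auto simp: simplicial_vertices_def)
  fix x y assume "x \<in> V" "y \<in> V"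
  then obtain zs where "walk_from_to E x y zs"
    using assms(2) unfolding connected_graph_def connected_on_def by blast
  then obtain xs where sp: "shortest_path E x y xs" by (rule shortest_path_exists)
  have "internal_vertices xs \<inter> simplicial_vertices V E = {}"
    using simplicial_not_internal[OF simple_graph_symp[OF assms(1)] sp] by blast
  with sp show "X_visible E (simplicial_vertices V E) x y" unfolding X_visible_def by blast
qed

lemma P_set_witnesses:
  assumes sym: "symp E" and "v \<in> P_set V E"
  obtains u w where "u \<in> V" "w \<in> V" "u \<noteq> w" "E u v" "E v w" "\<not> E u w"
    and "\<And>m. E u m \<Longrightarrow> E m w \<Longrightarrow> m = v"
proof -
  obtain u w where uw: "u \<in> V" "w \<in> V" "u \<noteq> w"
    and I: "\<And>m. (m = u \<or> E u m) \<and> (m = w \<or> E w m) \<longleftrightarrow> m = v"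
    using assms(2) unfolding P_set_def closed_nbhd_def by blast
  have nuw: "\<not> E u w" using I[of u] I[of w] sympD[OF sym, of u w] uw(3) by blast
  have "E u v" "E w v" using I[of v] uw(3) nuw sympD[OF sym, of w u] by blast+
  moreover have common: "m = v" if "E u m" "E m w" for m
    using I[of m] that sympD[OF sym, of m w] by blast
  ultimately show thesis using that[OF uw _ _ nuw common] sympD[OF sym] by blast
qed

lemma walk_from_to_nonadjacent_length_le_3:
  assumes walk: "walk_from_to E u w xs" and "length xs \<le> 3" and "u \<noteq> w" and "\<not> E u w"
  obtains m where "xs = [u, m, w]"
proof -
  obtain x ys where xs: "xs = x # ys" using walk by (cases xs) (auto simp: walk_from_to_iff)
  show thesis
  proof (cases ys)
    case Nil
    then show ?thesis using assms xs by (auto simp: walk_from_to_iff)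
  next
    case (Cons m zs)
    show ?thesis
    proof (cases zs)
      case Nil
      then show ?thesis using assms xs Cons by (auto simp: walk_from_to_iff)
    next
      case (Cons z ts)
      then show ?thesis using assms xs \<open>ys = m # zs\<close> that by (auto simp: walk_from_to_iff)
    qed
  qed
qed

lemma P_set_not_in_total_mutual_visibility_set:
  assumes sym: "symp E"
    and X: "total_mutual_visibility_set V E X" and v: "v \<in> P_set V E"
  shows "v \<notin> X"
proof
  assume "v \<in> X"
  obtain u w where uw: "u \<in> V" "w \<in> V" and "u \<noteq> w" "E u v" "E v w" "\<not> E u w"
    and unique: "\<And>m. E u m \<Longrightarrow> E m w \<Longrightarrow> m = v"
    by (rule P_set_witnesses[OF sym v]) blast
  from uw obtain xs where sp: "shortest_path E u w xs" and avoid: "internal_vertices xs \<inter> X = {}"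
    using X unfolding total_mutual_visibility_set_def X_visible_def by blast
  have "walk_from_to E u w [u, v, w]"
    using \<open>E u v\<close> \<open>E v w\<close> by (simp add: walk_from_to_iff)
  then have "length xs \<le> 3" using sp unfolding shortest_path_def by fastforce
  moreover have walk: "walk_from_to E u w xs" using sp by (simp add: shortest_path_def)
  ultimately obtain m where xs: "xs = [u, m, w]"
    using \<open>u \<noteq> w\<close> \<open>\<not> E u w\<close> by (elim walk_from_to_nonadjacent_length_le_3)
  with walk have "E u m" "E m w" by (simp_all add: walk_from_to_iff)
  then have "m = v" by (rule unique)
  with xs avoid \<open>v \<in> X\<close> show False by (simp add: internal_vertices_def)
qed

lemma simplicial_not_in_P_set:
  assumes sym: "symp E" and "v \<in> simplicial_vertices V E"
  shows "v \<notin> P_set V E"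
proof
  assume v: "v \<in> P_set V E"
  obtain u w where "u \<noteq> w" "E u v" "E v w" "\<not> E u w"
    by (rule P_set_witnesses[OF sym v]) blast
  with assms(2) sympD[OF sym, of u v] show False unfolding simplicial_vertices_def by blast
qed

lemma nonseparable_subset_block:
  assumes "finite V" and "nonseparable V E B"
  obtains B' where "is_block V E B'" and "B \<subseteq> B'"
proof -
  let ?A = "{B'. nonseparable V E B' \<and> B \<subseteq> B'}"
  have "?A \<subseteq> Pow V" by (auto simp: nonseparable_def)
  then have "finite ?A" using assms(1) by (simp add: finite_subset)
  moreover have "?A \<noteq> {}" using assms(2) by blast
  ultimately obtain M where M: "nonseparable V E M" "B \<subseteq> M"
    and max: "\<And>B'. nonseparable V E B' \<Longrightarrow> B \<subseteq> B' \<Longrightarrow> M \<subseteq> B' \<Longrightarrow> M = B'"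
    using finite_has_maximal[of ?A] by auto
  have "is_block V E M"
    unfolding is_block_def using M(1) max[OF _ order_trans[OF M(2)]] by blast
  then show thesis using M(2) by (rule that)
qed

lemma block_graph_non_simplicial_in_P_set:
  assumes sg: "simple_graph V E" and bg: "block_graph V E"
    and "v \<in> V" and "v \<notin> simplicial_vertices V E"
  shows "v \<in> P_set V E"
proof -
  have sym: "symp E" using sg by (rule simple_graph_symp)
  obtain a b where ab: "E v a" "E v b" "a \<noteq> b" "\<not> E a b"
    using assms(3,4) unfolding simplicial_vertices_def by blast
  have inV: "x \<in> V \<and> y \<in> V" if "E x y" for x y using sg that unfolding simple_graph_def by blast
  have irr: "\<not> E x x" and fin: "finite V" for x using sg unfolding simple_graph_def by blast+
  have no_common: "z = v" if "E a z" "E z b" for z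
    \<comment> \<open>otherwise a, v, b, z is a 4-cycle inside a block, and blocks are cliques\<close>
  proof (rule ccontr)
    assume "z \<noteq> v"
    have "distinct [a, v, b, z]"
      using ab that \<open>z \<noteq> v\<close> irr by auto
    moreover have "{a, v, b, z} \<subseteq> V"
      using inV ab that by blast
    ultimately have "nonseparable V E {a, v, b, z}"
      using cycle4_nonseparable[OF sym sympD[OF sym ab(1)] ab(2) sympD[OF sym that(2)]
          sympD[OF sym that(1)]] by blast
    then obtain B where "is_block V E B" and "{a, v, b, z} \<subseteq> B"
      by (rule nonseparable_subset_block[OF fin])
    with bg have "E a b" using ab(3) unfolding block_graph_def is_clique_def by blast
    with ab(4) show False ..
  qed
  have "closed_nbhd E a \<inter> closed_nbhd E b = {v}"
  proof (intro equalityI subsetI)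
    fix z assume "z \<in> closed_nbhd E a \<inter> closed_nbhd E b"
    then have "(z = a \<or> E a z) \<and> (z = b \<or> E b z)" by (simp add: closed_nbhd_def)
    then show "z \<in> {v}"
      using no_common[of z] ab(3,4) sympD[OF sym, of b a] sympD[OF sym, of b z] by blast
  next
    fix z assume "z \<in> {v}"
    then show "z \<in> closed_nbhd E a \<inter> closed_nbhd E b"
      using sympD[OF sym ab(1)] sympD[OF sym ab(2)] by (simp add: closed_nbhd_def)
  qed
  with ab(1-3) inV \<open>v \<in> V\<close> show ?thesis unfolding P_set_def by blast
qed

lemma mu_t_eq_card_greatest:
  assumes "finite V" and "total_mutual_visibility_set V E X"
    and "\<And>Y. total_mutual_visibility_set V E Y \<Longrightarrow> Y \<subseteq> X"
  shows "mu_t V E = card X"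
  unfolding mu_t_def
proof (rule Max_eqI)
  have "{X. total_mutual_visibility_set V E X} \<subseteq> Pow V"
    by (auto simp: total_mutual_visibility_set_def)
  with assms(1) show "finite (card ` {X. total_mutual_visibility_set V E X})"
    by (simp add: finite_subset)
  show "card X \<in> card ` {X. total_mutual_visibility_set V E X}" using assms(2) by blast
  fix k assume "k \<in> card ` {X. total_mutual_visibility_set V E X}"
  then obtain Y where "total_mutual_visibility_set V E Y" and k: "k = card Y" by blast
  with assms(3) have "Y \<subseteq> X" by blast
  moreover have "X \<subseteq> V" using assms(2) by (simp add: total_mutual_visibility_set_def)
  ultimately show "k \<le> card X" using k assms(1) by (simp add: card_mono finite_subset)
qed

lemma block_graph_simplicial_vertices_eq:
  assumes "simple_graph V E" and "block_graph V E"
  shows "simplicial_vertices V E = V - P_set V E"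
proof
  have "simplicial_vertices V E \<subseteq> V" by (auto simp: simplicial_vertices_def)
  then show "simplicial_vertices V E \<subseteq> V - P_set V E"
    using simplicial_not_in_P_set[OF simple_graph_symp[OF assms(1)]] by blast
  show "V - P_set V E \<subseteq> simplicial_vertices V E"
    using block_graph_non_simplicial_in_P_set[OF assms] by blast
qed

theorem corollary3p4:
  fixes V :: "'a set" and E :: "'a \<Rightarrow> 'a \<Rightarrow> bool"
  assumes "simple_graph V E" and "connected_graph V E" and "block_graph V E"
  shows "mu_t V E = card (simplicial_vertices V E)
       \<and> card (simplicial_vertices V E) = card V - card (P_set V E)"
proof
  have fin: "finite V" using assms(1) unfolding simple_graph_def by blast
  have S_eq: "simplicial_vertices V E = V - P_set V E"
    using assms(1,3) by (rule block_graph_simplicial_vertices_eq)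
  show "mu_t V E = card (simplicial_vertices V E)"
  proof (rule mu_t_eq_card_greatest[OF fin])
    show "total_mutual_visibility_set V E (simplicial_vertices V E)"
      using assms(1,2) by (rule simplicial_vertices_total_mutual_visibility)
    fix Y assume "total_mutual_visibility_set V E Y"
    then show "Y \<subseteq> simplicial_vertices V E"
      unfolding S_eq
      using P_set_not_in_total_mutual_visibility_set[OF simple_graph_symp[OF assms(1)]]
      by (auto simp: total_mutual_visibility_set_def)
  qed
  show "card (simplicial_vertices V E) = card V - card (P_set V E)"
    unfolding S_eq using fin by (simp add: card_Diff_subset finite_subset P_set_def)
qed

end
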